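(* Let $S=\begin{pmatrix}A&B\\C&D\end{pmatrix}\in\mathrm{Sp}(d,\mathbb R)$. Then $\mathbb R^d=\ker(B)^\perp\oplus D^TA(\ker(B))$.
   Context: $\mathrm{Sp}(d,\mathbb R)$ is the group of real $2d\times 2d$ matrices $S$ with $S^TJS=J$, $J=\begin{pmatrix}0_d&I_d\\-I_d&0_d\end{pmatrix}$, written in $d\times d$ blocks $A,B,C,D$. $\ker(B)^\perp$ is the orthogonal complement of the kernel of $B$ for the standard inner product; $\oplus$ denotes a (not necessarily orthogonal) direct sum. *)

theory Defs
  imports "HOL-Analysis.Analysis"
begin

text \<open>Real 2d x 2d matrices are indexed by the sum type 'n + 'n, with d = CARD('n);
  the first copy (Inl) indexes the first d coordinates, the second (Inr) the last d.\<close>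

definition symplJ :: "real ^ ('n::finite + 'n) ^ ('n + 'n)" where
  "symplJ = (\<chi> i j. case (i, j) of
       (Inl a, Inr b) \<Rightarrow> (if a = b then 1 else 0)
     | (Inr a, Inl b) \<Rightarrow> (if a = b then -1 else 0)
     | _ \<Rightarrow> 0)"

definition Sp :: "(real ^ ('n::finite + 'n) ^ ('n + 'n)) set" where
  "Sp = {S. transpose S ** symplJ ** S = symplJ}"

definition blkA :: "real ^ ('n::finite + 'n) ^ ('n + 'n) \<Rightarrow> real ^ 'n ^ 'n" where
  "blkA S = (\<chi> i j. S $ Inl i $ Inl j)"
definition blkB :: "real ^ ('n::finite + 'n) ^ ('n + 'n) \<Rightarrow> real ^ 'n ^ 'n" where
  "blkB S = (\<chi> i j. S $ Inl i $ Inr j)"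
definition blkC :: "real ^ ('n::finite + 'n) ^ ('n + 'n) \<Rightarrow> real ^ 'n ^ 'n" where
  "blkC S = (\<chi> i j. S $ Inr i $ Inl j)"
definition blkD :: "real ^ ('n::finite + 'n) ^ ('n + 'n) \<Rightarrow> real ^ 'n ^ 'n" where
  "blkD S = (\<chi> i j. S $ Inr i $ Inr j)"

definition mat_kernel :: "real ^ 'n ^ 'm \<Rightarrow> (real ^ 'n) set" where
  "mat_kernel M = {x. M *v x = 0}"

definition is_direct_sum :: "'a::real_vector set \<Rightarrow> 'a set \<Rightarrow> 'a set \<Rightarrow> bool" where
  "is_direct_sum X U V \<longleftrightarrow> subspace U \<and> subspace V \<and> U \<inter> V = {0} \<and>
     X = {u + v | u v. u \<in> U \<and> v \<in> V}"

end

theory Submission imports Defs begin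

text \<open>The symplectic relation \<open>S\<^sup>T J S = J\<close>, read in the upper right block, gives
  \<open>D\<^sup>T A = I + B\<^sup>T C\<close>. Hence on \<open>ker B\<close> the map \<open>D\<^sup>T A\<close> is the identity plus a map into
  \<open>ran B\<^sup>T \<subseteq> (ker B)\<^sup>\<bottom>\<close>, so \<open>D\<^sup>T A (ker B)\<close> is the graph of a linear map
  \<open>ker B \<rightarrow> (ker B)\<^sup>\<bottom>\<close>. Any such graph is a complement of \<open>(ker B)\<^sup>\<bottom>\<close>,
  because \<open>ker B\<close> itself is.\<close>

lemma is_direct_sum_orthogonal_comp_graph:
  fixes K :: "'a::euclidean_space set"
  assumes K: "subspace K" and f: "linear f"
    and graph: "\<And>x. x \<in> K \<Longrightarrow> f x - x \<in> orthogonal_comp K"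
  shows "is_direct_sum UNIV (orthogonal_comp K) (f ` K)"
  unfolding is_direct_sum_def
proof (intro conjI subspace_orthogonal_comp linear_subspace_image[OF f K])
  show "orthogonal_comp K \<inter> f ` K = {0}"
  proof (intro equalityI subsetI)
    fix y assume "y \<in> orthogonal_comp K \<inter> f ` K"
    then obtain x where x: "x \<in> K" and y: "y = f x" "y \<in> orthogonal_comp K" by blast
    have "x = y - (f x - x)" using y by simp
    also have "\<dots> \<in> orthogonal_comp K"
      using y(2) graph[OF x] by (rule subspace_diff[OF subspace_orthogonal_comp])
    finally have "x = 0" using x orthogonal_Int_0[OF K] by blast
    then show "y \<in> {0}" using y f by (simp add: linear_0)
  next
    fix y :: 'a assume "y \<in> {0}"
    then show "y \<in> orthogonal_comp K \<inter> f ` K"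
      using subspace_0[OF K] subspace_0[OF subspace_orthogonal_comp] linear_0[OF f]
      by (metis IntI image_eqI singletonD)
  qed
  show "UNIV = {u + v | u v. u \<in> orthogonal_comp K \<and> v \<in> f ` K}"
  proof (intro equalityI subsetI)
    fix y :: 'a
    obtain x w where x: "x \<in> K" and w: "w \<in> orthogonal_comp K" and "y = x + w"
      using subspace_sum_orthogonal_comp[OF K] set_plus_elim by (metis UNIV_I)
    then have "y = (w - (f x - x)) + f x" by simp
    moreover have "w - (f x - x) \<in> orthogonal_comp K"
      using w graph[OF x] by (rule subspace_diff[OF subspace_orthogonal_comp])
    ultimately show "y \<in> {u + v | u v. u \<in> orthogonal_comp K \<and> v \<in> f ` K}"
      using x by blast
  qed simp
qed

lemma subspace_mat_kernel: "subspace (mat_kernel M)"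
  unfolding subspace_def mat_kernel_def
  by (simp add: matrix_vector_right_distrib matrix_vector_mult_scaleR)

lemma transpose_mult_in_orthogonal_comp_mat_kernel:
  "transpose M *v z \<in> orthogonal_comp (mat_kernel M)"
  unfolding orthogonal_comp_def orthogonal_def mat_kernel_def
  by (simp add: vector_transpose_matrix inner_commute[of _ "z v* M"] dot_lmul_matrix)

lemma sum_UNIV_Plus:
  "sum f (UNIV :: ('a::finite + 'b::finite) set) = (\<Sum>a\<in>UNIV. f (Inl a)) + (\<Sum>b\<in>UNIV. f (Inr b))"
  using sum.Plus[of "UNIV::'a set" "UNIV::'b set" f] by (simp add: comp_def)

lemma symplectic_form_Inl_Inr:
  fixes S :: "real ^ ('n::finite + 'n) ^ ('n + 'n)"
  shows "(transpose S ** symplJ ** S) $ Inl j $ Inr i =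
    (\<Sum>k\<in>UNIV. S $ Inl k $ Inl j * S $ Inr k $ Inr i - S $ Inr k $ Inl j * S $ Inl k $ Inr i)"
  by (simp add: matrix_matrix_mult_def transpose_def symplJ_def sum_UNIV_Plus sum_subtractf sum_negf
      if_distrib[of "\<lambda>x. _ * x"] if_distrib[of "\<lambda>x. x * _"] cong: if_cong)

lemma Sp_upper_right_block_eq:
  fixes S :: "real ^ ('n::finite + 'n) ^ ('n + 'n)"
  assumes "S \<in> Sp"
  shows "transpose (blkD S) ** blkA S - transpose (blkB S) ** blkC S = mat 1"
proof -
  have "(\<Sum>k\<in>UNIV. S $ Inl k $ Inl j * S $ Inr k $ Inr i)
      - (\<Sum>k\<in>UNIV. S $ Inl k $ Inr i * S $ Inr k $ Inl j) = (if j = i then 1 else 0)" for i j :: 'n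
    using assms symplectic_form_Inl_Inr[of S j i]
    by (simp add: Sp_def symplJ_def sum_subtractf mult.commute)
  then show ?thesis
    by (simp add: vec_eq_iff matrix_matrix_mult_def transpose_def blkA_def blkB_def blkC_def blkD_def
        mat_def mult.commute)
qed

theorem lemma3p6:
  fixes S :: "real ^ ('n::finite + 'n) ^ ('n + 'n)"
  assumes "S \<in> Sp"
  shows "is_direct_sum (UNIV :: (real ^ 'n) set)
           (orthogonal_comp (mat_kernel (blkB S)))
           ((\<lambda>x. (transpose (blkD S) ** blkA S) *v x) ` mat_kernel (blkB S))"
proof (rule is_direct_sum_orthogonal_comp_graph[OF subspace_mat_kernel])
  show "linear (\<lambda>x. (transpose (blkD S) ** blkA S) *v x)"
    by (rule matrix_vector_mul_linear)
  fix x
  have "(transpose (blkD S) ** blkA S) *v x - x = transpose (blkB S) *v (blkC S *v x)"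
    using arg_cong[OF Sp_upper_right_block_eq[OF assms], of "\<lambda>M. M *v x"]
    by (simp add: matrix_vector_mult_diff_rdistrib matrix_vector_mul_assoc algebra_simps)
  then show "(transpose (blkD S) ** blkA S) *v x - x \<in> orthogonal_comp (mat_kernel (blkB S))"
    using transpose_mult_in_orthogonal_comp_mat_kernel[of "blkB S" "blkC S *v x"] by simp
qed

end
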